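(* Let $h_1,\dots,h_{n-k}$ be the generators of a valid rate-$k/n$ quantum convolutional code, where $h_i=(h_{i,1}\,|\,h_{i,2}\,|\cdots|\,h_{i,l_i})$ and each $h_{i,j}$ is an $n$-qubit Pauli operator. Then there exist an integer $m\ge 0$ and $m$-qubit Pauli operators $g_{i,j}$ ($1\le i\le n-k$, $1\le j\le l_i-1$) such that the commutation relations among the input operators of the encoding transformation described in the context are consistent with those among the corresponding output operators; that is, for any two rows $(\mathrm{in}_1\to\mathrm{out}_1)$ and $(\mathrm{in}_2\to\mathrm{out}_2)$ of the transformation, $\mathrm{in}_1\odot\mathrm{in}_2=\mathrm{out}_1\odot\mathrm{out}_2$.
   Context: Pauli operators are considered up to phase. For two Pauli operators $A,B$ on the same qubits, $A\odot B\in\{0,1\}$ equals $1$ if $A$ and $B$ anticommute and $0$ if they commute; for tensor products it is additive modulo $2$ over the factors. A qubit stream is divided into frames of $n$ qubits. A rate-$k/n$ quantum convolutional code is specified by $n-k$ generators $h_1,\dots,h_{n-k}$, where $h_i=(h_{i,1}|\cdots|h_{i,l_i})$ is a finite sequence of $n$-qubit Pauli operators ($l_i\ge1$ is the degree of $h_i$), $h_{i,j}$ acting on the $j$-th frame; the other generators of the code are all shifts of these by integer numbers of frames. The code is valid if all generators and all their frame shifts pairwise commute, i.e. for all $i,i'$ and all integers $t$, $\sum_{r}h_{i,r+t}\odot h_{i',r}=0 \pmod 2$, where $h_{i,j}:=I^{\otimes n}$ for $j\notin\{1,\dots,l_i\}$. Encoding transformation: an encoder acts on $m$ memory qubits, $n-k$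 ancilla qubits and $k$ information qubits, and outputs $n$ physical qubits and $m$ memory qubits. With $s=n-k$, set $g_{i,0}:=g_{i,l_i}:=I^{\otimes m}$, let $A_{i,0}:=Z_i$ (Pauli $Z$ on the $i$-th ancilla qubit, identity on the other ancillas) and $A_{i,j}:=I^{\otimes(n-k)}$ for $j\ge1$. The transformation consists of the rows $g_{i,j}\otimes A_{i,j}\otimes I^{\otimes k}\ \longrightarrow\ h_{i,j+1}\otimes g_{i,j+1}$ for $1\le i\le n-k$, $0\le j\le l_i-1$, where the left side is an operator on (memory, ancilla, information) qubits and the right side an operator on (physical, memory) qubits. *)

theory Defs
  imports Main
begin

datatype pauli = PI | PX | PY | PZ

fun anti :: "pauli \<Rightarrow> pauli \<Rightarrow> nat" where
  "anti a b = (if a \<noteq> PI \<and> b \<noteq> PI \<and> a \<noteq> b then 1 else 0)"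

text \<open>Multi-qubit Pauli operators (tensor products) are lists of single-qubit Paulis;
  the symplectic product is additive mod 2 over the factors.\<close>
definition odot :: "pauli list \<Rightarrow> pauli list \<Rightarrow> nat" where
  "odot A B = sum_list (map2 anti A B) mod 2"

definition ident :: "nat \<Rightarrow> pauli list" where
  "ident n = replicate n PI"

definition hext :: "nat \<Rightarrow> (nat \<Rightarrow> nat) \<Rightarrow> (nat \<Rightarrow> nat \<Rightarrow> pauli list) \<Rightarrow> nat \<Rightarrow> int \<Rightarrow> pauli list" where
  "hext n l h i j = (if 1 \<le> j \<and> j \<le> int (l i) then h i (nat j) else ident n)"

text \<open>The sum over all integers r reduces to the finite
  support r in 1..l i' of the second factor (all other terms commute with identity).\<close>
definition valid_qcc :: "nat \<Rightarrow> nat \<Rightarrow> (nat \<Rightarrow> nat) \<Rightarrow> (nat \<Rightarrow> nat \<Rightarrow> pauli list) \<Rightarrow> bool" where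
  "valid_qcc n k l h \<longleftrightarrow>
     (\<forall>i\<in>{1..n-k}. l i \<ge> 1 \<and> (\<forall>j\<in>{1..l i}. length (h i j) = n)) \<and>
     (\<forall>i\<in>{1..n-k}. \<forall>i'\<in>{1..n-k}. \<forall>t::int.
        (\<Sum>r\<in>{1..int (l i')}. odot (hext n l h i (r + t)) (hext n l h i' r)) mod 2 = 0)"

definition gext :: "nat \<Rightarrow> (nat \<Rightarrow> nat) \<Rightarrow> (nat \<Rightarrow> nat \<Rightarrow> pauli list) \<Rightarrow> nat \<Rightarrow> nat \<Rightarrow> pauli list" where
  "gext m l g i j = (if j = 0 \<or> j = l i then ident m else g i j)"

definition anc :: "nat \<Rightarrow> nat \<Rightarrow> nat \<Rightarrow> pauli list" where
  "anc s i j = (if j = 0 then (ident s)[i - 1 := PZ] else ident s)"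

text \<open>Input (memory, ancilla, information) and output (physical, memory) of row (i,j).\<close>
definition enc_in :: "nat \<Rightarrow> nat \<Rightarrow> nat \<Rightarrow> (nat \<Rightarrow> nat) \<Rightarrow> (nat \<Rightarrow> nat \<Rightarrow> pauli list) \<Rightarrow> nat \<Rightarrow> nat \<Rightarrow> pauli list" where
  "enc_in n k m l g i j = gext m l g i j @ anc (n - k) i j @ ident k"

definition enc_out :: "nat \<Rightarrow> (nat \<Rightarrow> nat) \<Rightarrow> (nat \<Rightarrow> nat \<Rightarrow> pauli list) \<Rightarrow> (nat \<Rightarrow> nat \<Rightarrow> pauli list) \<Rightarrow> nat \<Rightarrow> nat \<Rightarrow> pauli list" where
  "enc_out m l h g i j = h i (j + 1) @ gext m l g i (j + 1)"

definition is_row :: "nat \<Rightarrow> nat \<Rightarrow> (nat \<Rightarrow> nat) \<Rightarrow> nat \<Rightarrow> nat \<Rightarrow> bool" where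
  "is_row n k l i j \<longleftrightarrow> 1 \<le> i \<and> i \<le> n - k \<and> j < l i"

end

theory Submission
  imports Defs "HOL-Library.Product_Lexorder"
begin

text \<open>The memory operator \<open>g\<^sub>i\<^sub>,\<^sub>j\<close> must carry the commutation data of the part of the
  generator \<open>h\<^sub>i\<close> that has not yet been emitted, so one requires
  \<open>g\<^sub>i\<^sub>,\<^sub>j \<odot> g\<^sub>i\<^sub>',\<^sub>j\<^sub>' = \<Sum>\<^sub>t\<^sub>\<ge>\<^sub>1 h\<^sub>i\<^sub>,\<^sub>j\<^sub>+\<^sub>t \<odot> h\<^sub>i\<^sub>',\<^sub>j\<^sub>'\<^sub>+\<^sub>t\<close>.  This prescription is consistent with
  the boundary convention: for \<open>j = l\<^sub>i\<close> the sum is empty, and for \<open>j = 0\<close> it is a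
  commutation relation of the code, hence even.  Peeling off the term \<open>t = 1\<close> gives
  exactly the consistency of rows \<open>(i,j)\<close> and \<open>(i',j')\<close>, the ancillas contributing nothing
  because they only carry \<open>Z\<close>s.  Finally, any symmetric irreflexive pattern of commutation
  relations on finitely many operators is realized by Pauli strings, using one qubit for each
  pair of operators.\<close>

declare anti.simps [simp del]

lemma anti_commute: "anti a b = anti b a"
  by (auto simp: anti.simps)

lemma anti_self [simp]: "anti a a = 0"
  by (simp add: anti.simps)

lemma anti_PI [simp]: "anti PI b = 0" "anti b PI = 0"
  by (simp_all add: anti.simps)

lemma odot_commute: "odot A B = odot B A"
  unfolding odot_def
  by (subst zip_commute) (simp add: anti_commute case_prod_unfold comp_def)

lemma odot_eq_0_if_pointwise:
  assumes "\<And>a b. (a, b) \<in> set (zip A B) \<Longrightarrow> anti a b = 0"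
  shows "odot A B = 0"
proof -
  have "sum_list (map2 anti A B) = 0"
    using assms by auto
  then show ?thesis
    unfolding odot_def by (simp del: sum_list_eq_0_iff)
qed

lemma odot_self [simp]: "odot A A = 0"
  unfolding odot_def by (induction A) simp_all

lemma length_ident [simp]: "length (ident n) = n"
  by (simp add: ident_def)

lemma odot_ident_left [simp]: "odot (ident n) B = 0"
  by (rule odot_eq_0_if_pointwise) (auto simp: ident_def dest: set_zip_leftD)

lemma odot_ident_right [simp]: "odot B (ident n) = 0"
  using odot_commute odot_ident_left by metis

lemma odot_append:
  "length A = length C \<Longrightarrow> odot (A @ B) (C @ D) = (odot A C + odot B D) mod 2"
  unfolding odot_def by (simp add: zip_append mod_add_eq)

lemma odot_Z_type:
  assumes "set A \<subseteq> {PI, PZ}" "set B \<subseteq> {PI, PZ}"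
  shows "odot A B = 0"
  using assms
  by (intro odot_eq_0_if_pointwise) (auto simp: anti.simps dest: set_zip_leftD set_zip_rightD)

lemma odot_ancilla_information: "odot (anc s i j @ ident k) (anc s' i' j' @ ident k') = 0"
proof (rule odot_Z_type)
  have "set (anc s i j) \<subseteq> {PI, PZ}" for s i j
    using set_update_subset_insert[of "replicate s PI" "i - 1" PZ]
    by (auto simp: anc_def ident_def)
  then show "set (anc s i j @ ident k) \<subseteq> {PI, PZ}" "set (anc s' i' j' @ ident k') \<subseteq> {PI, PZ}"
    by (auto simp: ident_def)
qed

text \<open>Qubit \<open>(p,q)\<close> with \<open>p < q\<close> carries \<open>X\<close> in the \<open>p\<close>-th string and \<open>Z\<close> or \<open>X\<close> in the
  \<open>q\<close>-th one, according to whether they should anticommute.\<close>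

lemma commutation_pattern_realizable:
  fixes A :: "'a::linorder set" and C :: "'a \<Rightarrow> 'a \<Rightarrow> bool"
  assumes "finite A" and C_sym: "\<And>a b. C a b = C b a" and C_irrefl: "\<And>a. \<not> C a a"
  shows "\<exists>m P. (\<forall>a. length (P a) = m) \<and> (\<forall>a\<in>A. \<forall>b\<in>A. odot (P a) (P b) = of_bool (C a b))"
proof -
  define xs where "xs = sorted_list_of_set A"
  define Q where "Q = filter (\<lambda>(p, q). p < q) (List.product xs xs)"
  define f where "f a = (\<lambda>(p, q). if a = p then PX else if a = q \<and> C p q then PZ
                                 else if a = q then PX else PI)" for a
  define P where "P a = map (f a) Q" for a
  have Q: "distinct Q" "set Q = {(p, q). p \<in> A \<and> q \<in> A \<and> p < q}"
    using \<open>finite A\<close> by (auto simp: Q_def xs_def distinct_product)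
  have "odot (P a) (P b) = of_bool (C a b)" if "a \<in> A" "b \<in> A" for a b
  proof -
    have qubit: "anti (f a (p, q)) (f b (p, q)) = of_bool ((p, q) = (min a b, max a b) \<and> C a b)"
      if "p < q" for p q
      using that C_sym[of a b] C_irrefl[of a]
      by (cases a b rule: linorder_cases) (auto simp: f_def anti.simps)
    have "sum_list (map2 anti (P a) (P b)) = (\<Sum>x\<in>set Q. anti (f a x) (f b x))"
      using Q(1) by (simp add: P_def zip_map_map zip_same_conv_map comp_def sum_list_distinct_conv_sum_set)
    also have "\<dots> = (\<Sum>x\<in>set Q. if x = (min a b, max a b) then of_bool (C a b) else 0)"
      by (intro sum.cong) (auto simp: Q qubit)
    also have "\<dots> = of_bool (C a b)"
      using that C_irrefl[of a] by (simp add: sum.delta[OF finite_set]) (auto simp: Q min_def max_def)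
    finally show ?thesis
      unfolding odot_def by simp
  qed
  then show ?thesis
    by (intro exI[of _ "length Q"] exI[of _ P]) (simp add: P_def)
qed

text \<open>\<open>tail_odot F T i j i' j'\<close> is \<open>\<Sum>\<^sub>t\<^sub>=\<^sub>1\<^sub>.\<^sub>.\<^sub>T F\<^sub>i\<^sub>,\<^sub>j\<^sub>+\<^sub>t \<odot> F\<^sub>i\<^sub>',\<^sub>j\<^sub>'\<^sub>+\<^sub>t\<close>; for finitely supported
  sequences and \<open>T\<close> beyond all supports it does not depend on \<open>T\<close>.\<close>

definition tail_odot :: "(nat \<Rightarrow> nat \<Rightarrow> pauli list) \<Rightarrow> nat \<Rightarrow> nat \<Rightarrow> nat \<Rightarrow> nat \<Rightarrow> nat \<Rightarrow> nat" where
  "tail_odot F T i j i' j' = (\<Sum>t<T. odot (F i (j + t + 1)) (F i' (j' + t + 1)))"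

lemma tail_odot_commute: "tail_odot F T i j i' j' = tail_odot F T i' j' i j"
  unfolding tail_odot_def using odot_commute by metis

lemma tail_odot_self [simp]: "tail_odot F T i j i j = 0"
  by (simp add: tail_odot_def)

lemma tail_odot_exhausted:
  assumes "\<And>r. j < r \<Longrightarrow> F i r = ident N"
  shows "tail_odot F T i j i' j' = 0"
  using assms by (simp add: tail_odot_def)

lemma tail_odot_unfold:
  assumes "0 < T" and "F i (j + T + 1) = ident N"
  shows "tail_odot F T i j i' j'
           = odot (F i (j + 1)) (F i' (j' + 1)) + tail_odot F T i (j + 1) i' (j' + 1)"
proof -
  obtain T' where T': "T = Suc T'"
    using \<open>0 < T\<close> gr0_implies_Suc by blast
  define f where "f t = odot (F i (j + t + 1)) (F i' (j' + t + 1))" for t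
  have "tail_odot F T i j i' j' = f 0 + (\<Sum>t<T'. f (Suc t))"
    unfolding tail_odot_def f_def[symmetric] T' by (rule sum.lessThan_Suc_shift)
  moreover have "tail_odot F T i (j + 1) i' (j' + 1) = (\<Sum>t<T'. f (Suc t)) + f (Suc T')"
    unfolding tail_odot_def T' by (simp add: f_def ac_simps)
  moreover have "f (Suc T') = 0"
    using assms(2) by (simp add: f_def T' ac_simps)
  ultimately show ?thesis
    by (simp add: f_def)
qed

lemma hext_beyond_degree: "int (l i) < r \<Longrightarrow> hext n l h i r = ident n"
  by (simp add: hext_def)

lemma hext_within_degree: "1 \<le> j \<Longrightarrow> j \<le> l i \<Longrightarrow> hext n l h i (int j) = h i j"
  by (simp add: hext_def)

lemma tail_odot_start_even:
  assumes "valid_qcc n k l h" and "i \<in> {1..n-k}" "i' \<in> {1..n-k}" and "l i \<le> T"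
  shows "tail_odot (\<lambda>i j. hext n l h i (int j)) T i 0 i' j' mod 2 = 0"
proof -
  let ?H = "hext n l h"
  have valid: "(\<Sum>r\<in>{1..int (l i)}. odot (?H i' (r + int j')) (?H i r)) mod 2 = 0"
    using assms(1-3) unfolding valid_qcc_def by blast
  have "(\<Sum>r\<in>{1..int (l i)}. odot (?H i' (r + int j')) (?H i r))
      = (\<Sum>r\<in>{1..l i}. odot (?H i' (int r + int j')) (?H i (int r)))"
    by (simp add: image_int_atLeastAtMost[of 1, symmetric, simplified] sum.reindex)
  also have "\<dots> = (\<Sum>t<l i. odot (?H i' (int (t + 1) + int j')) (?H i (int (t + 1))))"
    by (simp add: sum.atLeast1_atMost_eq[where n = "l i", simplified])
  also have "\<dots> = (\<Sum>t<T. odot (?H i' (int (t + 1) + int j')) (?H i (int (t + 1))))"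
    using \<open>l i \<le> T\<close> by (intro sum.mono_neutral_left) (auto simp: hext_beyond_degree)
  also have "\<dots> = tail_odot (\<lambda>i j. ?H i (int j)) T i 0 i' j'"
    unfolding tail_odot_def by (intro sum.cong refl) (simp add: odot_commute ac_simps)
  finally show ?thesis
    using valid by simp
qed

definition memory_tracks_tails ::
    "nat \<Rightarrow> nat \<Rightarrow> nat \<Rightarrow> (nat \<Rightarrow> nat) \<Rightarrow> (nat \<Rightarrow> nat \<Rightarrow> pauli list) \<Rightarrow> nat
      \<Rightarrow> (nat \<Rightarrow> nat \<Rightarrow> pauli list) \<Rightarrow> bool" where
  "memory_tracks_tails n k m l h T g \<longleftrightarrow>
     (\<forall>i\<in>{1..n-k}. \<forall>i'\<in>{1..n-k}. \<forall>j\<le>l i. \<forall>j'\<le>l i'.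
        odot (gext m l g i j) (gext m l g i' j')
          = tail_odot (\<lambda>i j. hext n l h i (int j)) T i j i' j' mod 2)"

lemma tail_odot_boundary_even:
  assumes "valid_qcc n k l h" and "i \<in> {1..n-k}" "i' \<in> {1..n-k}" and "l i \<le> T"
    and "j = 0 \<or> j = l i"
  shows "tail_odot (\<lambda>i j. hext n l h i (int j)) T i j i' j' mod 2 = 0"
proof (cases "j = 0")
  case True
  then show ?thesis
    using tail_odot_start_even[OF assms(1-4)] by simp
next
  case False
  then have "\<And>r. j < r \<Longrightarrow> hext n l h i (int r) = ident n"
    using assms(5) by (simp add: hext_beyond_degree)
  then show ?thesis
    by (simp add: tail_odot_exhausted)
qed

lemma memory_operators_exist:
  assumes valid: "valid_qcc n k l h" and T: "\<And>i. i \<in> {1..n-k} \<Longrightarrow> l i \<le> T"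
  shows "\<exists>m g. (\<forall>i j. length (g i j) = m) \<and> memory_tracks_tails n k m l h T g"
proof -
  let ?tail = "tail_odot (\<lambda>i j. hext n l h i (int j)) T"
  define C where "C = (\<lambda>(i, j) (i', j'). odd (?tail i j i' j'))"
  obtain m P where len: "\<forall>a. length (P a) = m"
    and P: "\<forall>a\<in>{1..n-k} \<times> {..T}. \<forall>b\<in>{1..n-k} \<times> {..T}. odot (P a) (P b) = of_bool (C a b)"
    using commutation_pattern_realizable[of "{1..n-k} \<times> {..T}" C]
    by (auto simp: C_def tail_odot_commute)
  define g where "g i j = P (i, j)" for i j
  have "odot (gext m l g i j) (gext m l g i' j') = ?tail i j i' j' mod 2"
    if i: "i \<in> {1..n-k}" "i' \<in> {1..n-k}" and j: "j \<le> l i" "j' \<le> l i'" for i i' j j'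
  proof (cases "j = 0 \<or> j = l i \<or> j' = 0 \<or> j' = l i'")
    case True
    then show ?thesis
      using tail_odot_boundary_even[OF valid i T[OF i(1)], of j j']
        tail_odot_boundary_even[OF valid i(2,1) T[OF i(2)], of j' j]
      by (auto simp: gext_def tail_odot_commute)
  next
    case False
    then have "gext m l g i j = P (i, j)" "gext m l g i' j' = P (i', j')"
      by (simp_all add: gext_def g_def)
    moreover have "(i, j) \<in> {1..n-k} \<times> {..T}" "(i', j') \<in> {1..n-k} \<times> {..T}"
      using i j T[OF i(1)] T[OF i(2)] by auto
    ultimately show ?thesis
      using P by (simp add: C_def odd_iff_mod_2_eq_one)
  qed
  then have "memory_tracks_tails n k m l h T g"
    unfolding memory_tracks_tails_def by blast
  moreover have "\<forall>i j. length (g i j) = m"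
    using len by (simp add: g_def)
  ultimately show ?thesis
    by blast
qed

lemma encoding_rows_consistent:
  assumes valid: "valid_qcc n k l h" and T: "\<And>i. i \<in> {1..n-k} \<Longrightarrow> l i \<le> T"
    and len: "\<forall>i j. length (g i j) = m" and memory: "memory_tracks_tails n k m l h T g"
    and rows: "is_row n k l i j" "is_row n k l i' j'"
  shows "odot (enc_in n k m l g i j) (enc_in n k m l g i' j')
           = odot (enc_out m l h g i j) (enc_out m l h g i' j')"
proof -
  let ?F = "\<lambda>i j. hext n l h i (int j)"
  let ?tail = "tail_odot ?F T"
  have i: "i \<in> {1..n-k}" "i' \<in> {1..n-k}" and j: "j < l i" "j' < l i'"
    using rows by (auto simp: is_row_def)
  have len_gext: "length (gext m l g a b) = m" for a b
    using len by (simp add: gext_def)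
  have len_h: "length (h i (j + 1)) = length (h i' (j' + 1))"
    using valid i j by (simp add: valid_qcc_def)
  have frame: "?F i (j + 1) = h i (j + 1)" "?F i' (j' + 1) = h i' (j' + 1)"
    using j by (intro hext_within_degree; simp)+
  have memory_at: "odot (gext m l g i a) (gext m l g i' b) = ?tail i a i' b mod 2"
    if "a \<le> l i" "b \<le> l i'" for a b
    using memory i that unfolding memory_tracks_tails_def by blast
  have "odot (enc_in n k m l g i j) (enc_in n k m l g i' j') = ?tail i j i' j' mod 2"
    using memory_at j len_gext by (simp add: enc_in_def odot_append odot_ancilla_information)
  also have "\<dots> = (odot (h i (j + 1)) (h i' (j' + 1)) + ?tail i (j + 1) i' (j' + 1)) mod 2"
    using tail_odot_unfold[of T ?F i j n i' j'] T[OF i(1)] j frame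
    by (simp add: hext_beyond_degree)
  also have "\<dots> = odot (enc_out m l h g i j) (enc_out m l h g i' j')"
    using memory_at[of "j + 1" "j' + 1"] j len_h
    by (simp add: enc_out_def odot_append mod_add_right_eq)
  finally show ?thesis .
qed

theorem theorem1:
  fixes n k :: nat and l :: "nat \<Rightarrow> nat" and h :: "nat \<Rightarrow> nat \<Rightarrow> pauli list"
  assumes "k \<le> n"
    and "valid_qcc n k l h"
  shows "\<exists>(m::nat) (g :: nat \<Rightarrow> nat \<Rightarrow> pauli list).
           (\<forall>i\<in>{1..n-k}. \<forall>j\<in>{1..l i - 1}. length (g i j) = m) \<and>
           (\<forall>i j i' j'. is_row n k l i j \<longrightarrow> is_row n k l i' j' \<longrightarrow>
              odot (enc_in n k m l g i j) (enc_in n k m l g i' j') =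
              odot (enc_out m l h g i j) (enc_out m l h g i' j'))"
proof -
  define T where "T = (\<Sum>i\<in>{1..n-k}. l i)"
  have T: "l i \<le> T" if "i \<in> {1..n-k}" for i
    using that unfolding T_def by (intro member_le_sum) auto
  obtain m g where "\<forall>i j. length (g i j) = m" and "memory_tracks_tails n k m l h T g"
    using memory_operators_exist[OF assms(2) T] by blast
  then show ?thesis
    using encoding_rows_consistent[OF assms(2) T] by blast
qed

end
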